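(* Let $G$ be a finite group and $H$ a subgroup of $G$. Then $|\mathrm{Solv}(H)| \leq |\mathrm{Solv}(G)|$.
   Context: For a finite group $G$ and $x \in G$, the solvabilizer of $x$ in $G$ is $\mathrm{Sol}_G(x) = \{y \in G : \langle x, y \rangle \text{ is solvable}\}$. $\mathrm{Solv}(G) = \{\mathrm{Sol}_G(x) : x \in G\}$ is the set of distinct solvabilizers of elements of $G$. *)

theory Defs
  imports "HOL-Algebra.Solvable_Groups" "HOL-Algebra.Generated_Groups"
begin

definition solvabilizer :: "('a, 'b) monoid_scheme \<Rightarrow> 'a \<Rightarrow> 'a set" where
  "solvabilizer G x =
     {y \<in> carrier G. solvable (G\<lparr>carrier := generate G {x, y}\<rparr>)}"

definition Solv :: "('a, 'b) monoid_scheme \<Rightarrow> 'a set set" where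
  "Solv G = (\<lambda>x. solvabilizer G x) ` carrier G"

end

theory Submission
  imports Defs
begin

text \<open>For \<open>x, y \<in> H\<close> the subgroup \<open>\<langle>x, y\<rangle>\<close> is the same whether generated in \<open>H\<close> or in \<open>G\<close>,
  so the solvabilizer of \<open>x\<close> in \<open>H\<close> is the trace on \<open>H\<close> of its solvabilizer in \<open>G\<close>.
  Hence \<open>Solv(H)\<close> is the image of the subset \<open>{Sol\<^sub>G(x) : x \<in> H}\<close> of \<open>Solv(G)\<close>
  under \<open>S \<mapsto> S \<inter> H\<close>, and cannot be larger than \<open>Solv(G)\<close>.\<close>

lemma solvabilizer_subgroup:
  assumes "group G" "subgroup H G" "x \<in> H"
  shows "solvabilizer (G\<lparr>carrier := H\<rparr>) x = solvabilizer G x \<inter> H"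
proof -
  have "generate (G\<lparr>carrier := H\<rparr>) {x, y} = generate G {x, y}" if "y \<in> H" for y
    using group.generate_consistent[OF assms(1) _ assms(2)] that assms(3) by simp
  then show ?thesis
    using subgroup.subset[OF assms(2)] by (auto simp: solvabilizer_def)
qed

lemma Solv_subgroup:
  assumes "group G" "subgroup H G"
  shows "Solv (G\<lparr>carrier := H\<rparr>) = (\<lambda>S. S \<inter> H) ` solvabilizer G ` H"
  using solvabilizer_subgroup[OF assms] by (simp add: Solv_def image_image)

theorem lemma2p4:
  fixes G :: "('a, 'b) monoid_scheme" and H :: "'a set"
  assumes "group G" and "finite (carrier G)" and "subgroup H G"
  shows "card (Solv (G\<lparr>carrier := H\<rparr>)) \<le> card (Solv G)"
proof -
  have H_sub: "H \<subseteq> carrier G"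
    using subgroup.subset[OF assms(3)] .
  then have "finite H"
    using assms(2) finite_subset by blast
  then have "card (Solv (G\<lparr>carrier := H\<rparr>)) \<le> card (solvabilizer G ` H)"
    unfolding Solv_subgroup[OF assms(1,3)] by (intro card_image_le finite_imageI)
  also have "\<dots> \<le> card (Solv G)"
    unfolding Solv_def using H_sub assms(2) by (intro card_mono finite_imageI image_mono)
  finally show ?thesis .
qed

end
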